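(* Let $K$ be a compact connected subgroup of $U(N)$ and $A\in\mathbb{C}^{N\times N}$. (a) The orbit $\mathcal{O}_K(A)$ is weakly rotationally symmetric if and only if $\mathcal{O}_K(A^\dagger)$ is weakly rotationally symmetric. (b) If $\mathcal{O}_K(A)$ is weakly rotationally symmetric, then so is $\mathcal{O}_K([[A,A^\dagger],A])$.
   Context: $\mathcal{O}_K(X)=\{UXU^\dagger\mid U\in K\}$; it is weakly rotationally symmetric if $e^{i\varphi}\mathcal{O}_K(X)=\mathcal{O}_K(X)$ for all $\varphi\in\mathbb{R}$. $[X,Y]=XY-YX$. *)

theory Defs
  imports "HOL-Analysis.Analysis"
begin

text \<open>Complex N x N matrices are represented as complex^'n^'n, with N = CARD('n).\<close>

definition cadj :: "complex^'n^'m \<Rightarrow> complex^'m^'n" where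
  "cadj A = (\<chi> i j. cnj (A $ j $ i))"

definition cscale :: "complex \<Rightarrow> complex^'n^'m \<Rightarrow> complex^'n^'m" where
  "cscale c A = (\<chi> i j. c * A $ i $ j)"

definition unitary_group :: "(complex^'n^'n) set" where
  "unitary_group = {U. U ** cadj U = mat 1 \<and> cadj U ** U = mat 1}"

definition is_subgroup_of_U :: "(complex^'n^'n) set \<Rightarrow> bool" where
  "is_subgroup_of_U K \<longleftrightarrow> K \<subseteq> unitary_group \<and> mat 1 \<in> K
     \<and> (\<forall>U\<in>K. \<forall>V\<in>K. U ** V \<in> K) \<and> (\<forall>U\<in>K. matrix_inv U \<in> K)"

definition orbit :: "(complex^'n^'n) set \<Rightarrow> complex^'n^'n \<Rightarrow> (complex^'n^'n) set" where
  "orbit K X = {U ** X ** cadj U | U. U \<in> K}"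

definition weakly_rot_sym :: "(complex^'n^'n) set \<Rightarrow> bool" where
  "weakly_rot_sym S \<longleftrightarrow> (\<forall>\<phi>::real. cscale (exp (\<i> * complex_of_real \<phi>)) ` S = S)"

definition commutator :: "complex^'n^'n \<Rightarrow> complex^'n^'n \<Rightarrow> complex^'n^'n" where
  "commutator X Y = X ** Y - Y ** X"

end

theory Submission
  imports Defs
begin

text \<open>Both maps \<open>X \<mapsto> X\<^sup>\<dagger>\<close> and \<open>X \<mapsto> [[X, X\<^sup>\<dagger>], X]\<close> commute with unitary conjugation,
  so they carry the orbit of \<open>A\<close> onto the orbit of the image of \<open>A\<close>. They also
  map the circle of phases onto itself: \<open>(cX)\<^sup>\<dagger> = c\<inverse> X\<^sup>\<dagger>\<close> and
  \<open>[[cX, (cX)\<^sup>\<dagger>], cX] = c [[X, X\<^sup>\<dagger>], X]\<close> for \<open>|c| = 1\<close>. Hence they preserve weak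
  rotational symmetry of sets, and the first one is an involution.\<close>

lemma matrix_mult_diff_left: "(A - B) ** C = A ** C - B ** (C :: 'a::ring_1^_^_)"
  by (simp add: vec_eq_iff matrix_matrix_mult_def algebra_simps sum_subtractf)

lemma matrix_mult_diff_right: "A ** (B - C) = A ** B - A ** (C :: 'a::ring_1^_^_)"
  by (simp add: vec_eq_iff matrix_matrix_mult_def algebra_simps sum_subtractf)

lemma cadj_cadj [simp]: "cadj (cadj A) = A"
  by (simp add: cadj_def vec_eq_iff)

lemma cadj_matrix_mult: "cadj (A ** B) = cadj B ** cadj A"
  by (simp add: cadj_def vec_eq_iff matrix_matrix_mult_def mult.commute)

lemma cadj_cscale: "cadj (cscale c A) = cscale (cnj c) (cadj A)"
  by (simp add: cadj_def cscale_def vec_eq_iff)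

lemma cscale_cscale: "cscale c (cscale d A) = cscale (c * d) A"
  by (simp add: cscale_def vec_eq_iff)

lemma cscale_diff: "cscale c (A - B) = cscale c A - cscale c B"
  by (simp add: cscale_def vec_eq_iff algebra_simps)

lemma cscale_matrix_mult_left: "cscale c A ** B = cscale c (A ** B)"
  by (simp add: cscale_def vec_eq_iff matrix_matrix_mult_def sum_distrib_left mult.assoc)

lemma cscale_matrix_mult_right: "A ** cscale c B = cscale c (A ** B)"
  by (simp add: cscale_def vec_eq_iff matrix_matrix_mult_def sum_distrib_left mult.left_commute)

lemma commutator_cscale:
  "commutator (cscale c X) (cscale d Y) = cscale (c * d) (commutator X Y)"
  by (simp add: commutator_def cscale_matrix_mult_left cscale_matrix_mult_right cscale_cscale
      cscale_diff mult.commute)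

lemma double_commutator_cadj_cscale:
  "commutator (commutator (cscale c X) (cadj (cscale c X))) (cscale c X)
     = cscale (c * cnj c * c) (commutator (commutator X (cadj X)) X)"
  by (simp add: cadj_cscale commutator_cscale)

lemma cadj_conj: "cadj (U ** X ** cadj U) = U ** cadj X ** cadj U"
  by (simp add: cadj_matrix_mult matrix_mul_assoc)

lemma conj_matrix_mult:
  assumes "cadj U ** U = mat 1"
  shows "(U ** X ** cadj U) ** (U ** Y ** cadj U) = U ** (X ** Y) ** cadj U"
proof -
  have "(U ** X ** cadj U) ** (U ** Y ** cadj U) = U ** X ** (cadj U ** U) ** Y ** cadj U"
    by (simp add: matrix_mul_assoc)
  then show ?thesis
    using assms by (simp add: matrix_mul_assoc)
qed

lemma commutator_conj:
  assumes "cadj U ** U = mat 1"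
  shows "commutator (U ** X ** cadj U) (U ** Y ** cadj U) = U ** commutator X Y ** cadj U"
  using assms
  by (simp add: commutator_def conj_matrix_mult matrix_mult_diff_left matrix_mult_diff_right)

lemma orbit_image_equivariant:
  assumes "\<And>U X. U \<in> K \<Longrightarrow> g (U ** X ** cadj U) = U ** g X ** cadj U"
  shows "orbit K (g A) = g ` orbit K A"
  using assms unfolding orbit_def by (auto simp: image_iff) metis

lemma weakly_rot_sym_iff_cis: "weakly_rot_sym S \<longleftrightarrow> (\<forall>\<phi>. cscale (cis \<phi>) ` S = S)"
  by (simp add: weakly_rot_sym_def cis_conv_exp)

lemma weakly_rot_sym_image:
  assumes "weakly_rot_sym S"
    and "\<And>\<phi>. \<exists>\<psi>. \<forall>X. cscale (cis \<phi>) (g X) = g (cscale (cis \<psi>) X)"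
  shows "weakly_rot_sym (g ` S)"
  unfolding weakly_rot_sym_iff_cis
proof
  fix \<phi>
  obtain \<psi> where \<psi>: "\<And>X. cscale (cis \<phi>) (g X) = g (cscale (cis \<psi>) X)"
    using assms(2) by blast
  have "cscale (cis \<phi>) ` g ` S = g ` cscale (cis \<psi>) ` S"
    by (simp add: \<psi> image_image)
  also have "\<dots> = g ` S"
    using assms(1) by (simp add: weakly_rot_sym_iff_cis)
  finally show "cscale (cis \<phi>) ` g ` S = g ` S" .
qed

lemma weakly_rot_sym_cadj_image:
  assumes "weakly_rot_sym S"
  shows "weakly_rot_sym (cadj ` S)"
proof (rule weakly_rot_sym_image[OF assms])
  fix \<phi>
  show "\<exists>\<psi>. \<forall>X. cscale (cis \<phi>) (cadj X) = cadj (cscale (cis \<psi>) X)"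
    by (rule exI[of _ "- \<phi>"]) (simp add: cadj_cscale cis_cnj)
qed

lemma weakly_rot_sym_cadj_image_iff: "weakly_rot_sym (cadj ` S) \<longleftrightarrow> weakly_rot_sym S"
  using weakly_rot_sym_cadj_image[of S] weakly_rot_sym_cadj_image[of "cadj ` S"]
  by (auto simp: image_image)

lemma weakly_rot_sym_double_commutator_image:
  assumes "weakly_rot_sym S"
  shows "weakly_rot_sym ((\<lambda>X. commutator (commutator X (cadj X)) X) ` S)"
proof (rule weakly_rot_sym_image[OF assms])
  fix \<phi>
  have "cis \<phi> * cnj (cis \<phi>) = 1"
    by (simp add: cis_cnj cis_mult)
  then show "\<exists>\<psi>. \<forall>X. cscale (cis \<phi>) (commutator (commutator X (cadj X)) X)
      = commutator (commutator (cscale (cis \<psi>) X) (cadj (cscale (cis \<psi>) X))) (cscale (cis \<psi>) X)"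
    by (intro exI[of _ \<phi>]) (simp add: double_commutator_cadj_cscale)
qed

theorem corollary2p25:
  fixes K :: "(complex^'n^'n) set" and A :: "complex^'n^'n"
  assumes "is_subgroup_of_U K" and "compact K" and "connected K"
  shows "(weakly_rot_sym (orbit K A) \<longleftrightarrow> weakly_rot_sym (orbit K (cadj A)))
    \<and> (weakly_rot_sym (orbit K A) \<longrightarrow>
         weakly_rot_sym (orbit K (commutator (commutator A (cadj A)) A)))"
proof -
  have unitary: "\<And>U. U \<in> K \<Longrightarrow> cadj U ** U = mat 1"
    using assms(1) unfolding is_subgroup_of_U_def unitary_group_def by blast
  have "orbit K (cadj A) = cadj ` orbit K A"
    by (rule orbit_image_equivariant) (rule cadj_conj)
  moreover have "orbit K (commutator (commutator A (cadj A)) A)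
      = (\<lambda>X. commutator (commutator X (cadj X)) X) ` orbit K A"
    by (rule orbit_image_equivariant) (simp add: commutator_conj cadj_conj unitary)
  ultimately show ?thesis
    by (simp add: weakly_rot_sym_cadj_image_iff weakly_rot_sym_double_commutator_image)
qed

end
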